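(* Let $\varepsilon>0$ and let $\tau\in F_2$ with $\operatorname{Im}\tau_{12}\ge\varepsilon$ and $\operatorname{Im}\tau_1\ge\max\{1/\varepsilon,31\}$. Let $a=(\tfrac12,\tfrac12)$ and $b=(0,0)$ or $b=(\tfrac12,\tfrac12)$. Then $$|\theta_{a,b}(0,\tau)|\,e^{\pi\,{}^ta\operatorname{Im}\tau\,a}\ge\min\{\varepsilon/2,\ 0{,}31\}.$$
   Context: $F_2$ is the standard Siegel fundamental domain for $\mathrm{Sp}_4(\mathbb{Z})$ acting on symmetric complex $2\times2$ matrices $\tau=\begin{pmatrix}\tau_1&\tau_{12}\\ \tau_{12}&\tau_2\end{pmatrix}$ with $\operatorname{Im}\tau>0$; every $\tau\in F_2$ satisfies $|\operatorname{Re}\tau_{ij}|\le 1/2$, $\operatorname{Im}\tau_2\ge\operatorname{Im}\tau_1\ge 2\operatorname{Im}\tau_{12}\ge 0$, $\operatorname{Im}\tau_1\ge\sqrt3/2$. $\theta_{a,b}(Z,\tau)=\sum_{n\in\mathbb{Z}^2}\exp\big(2i\pi(\tfrac12{}^t(n+a)\tau(n+a)+{}^t(n+a)(Z+b))\big)$. *)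

theory Defs
  imports "HOL-Analysis.Analysis"
begin

definition im_mat :: "complex^2^2 \<Rightarrow> real^2^2" where
  "im_mat \<tau> = (\<chi> i j. Im (\<tau>$i$j))"

definition re_mat :: "complex^2^2 \<Rightarrow> real^2^2" where
  "re_mat \<tau> = (\<chi> i j. Re (\<tau>$i$j))"

definition of_int_mat :: "int^2^2 \<Rightarrow> complex^2^2" where
  "of_int_mat M = (\<chi> i j. of_int (M$i$j))"

definition siegel_H2 :: "(complex^2^2) set" where
  "siegel_H2 = {\<tau>. transpose \<tau> = \<tau> \<and>
     (\<forall>v::real^2. v \<noteq> 0 \<longrightarrow> v \<bullet> (im_mat \<tau> *v v) > 0)}"

text \<open>Sp_4(Z) in block form M = (A B; C D): the condition M^T J M = J with
  J = (0 I; -I 0), written out blockwise.\<close>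
definition sp4Z :: "((int^2^2) \<times> (int^2^2) \<times> (int^2^2) \<times> (int^2^2)) set" where
  "sp4Z = {(A,B,C,D). transpose A ** C - transpose C ** A = 0 \<and>
                     transpose B ** D - transpose D ** B = 0 \<and>
                     transpose A ** D - transpose C ** B = mat 1}"

definition F2 :: "(complex^2^2) set" where
  "F2 = {\<tau> \<in> siegel_H2.
     (\<forall>(A,B,C,D)\<in>sp4Z. cmod (det (of_int_mat C ** \<tau> + of_int_mat D)) \<ge> 1) \<and>
     (0 \<le> 2 * Im (\<tau>$1$2) \<and> 2 * Im (\<tau>$1$2) \<le> Im (\<tau>$1$1) \<and> Im (\<tau>$1$1) \<le> Im (\<tau>$2$2)) \<and>
     (\<forall>i j. \<bar>Re (\<tau>$i$j)\<bar> \<le> 1/2)}"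

definition theta_char :: "real^2 \<Rightarrow> real^2 \<Rightarrow> complex^2 \<Rightarrow> complex^2^2 \<Rightarrow> complex" where
  "theta_char a b Z \<tau> = (\<Sum>\<^sub>\<infinity>n::int^2 \<in> UNIV.
     (let v = (\<chi> i. of_real (of_int (n$i) + a$i)) :: complex^2 in
      exp (2 * pi * \<i> * ((1/2) * (\<Sum>i\<in>UNIV. \<Sum>j\<in>UNIV. v$i * \<tau>$i$j * v$j)
                         + (\<Sum>i\<in>UNIV. v$i * (Z$i + of_real (b$i)))))))"

end

theory Submission
  imports Defs
begin

(* Write y1 = Im tau_1, t = Im tau_12, y2 = Im tau_2 and Q for the quadratic form of Im tau.
   After multiplying by E = exp (pi Q(a)), the four lattice points n with n + a in
   {+-(1/2,1/2), +-(1/2,-1/2)} (the "core") contribute 2 e^0 + 2 e^(pi t) up to phases;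
   the reflection n |-> -1-n makes the core sum equal to 2 g(0,0) + 2 g(0,-1), so its
   modulus is at least 2 (exp (pi t) - 1).  Every other term is bounded, via a gap estimate
   for Q on the half-integer lattice, by w^m1 w^m2 with w = exp (-pi y1/2) and m_i the
   distance of n_i from {0,-1}; a two-sided geometric series bounds their total by
   (2/(1-w))^2 - 4.  Finally an elementary numerical estimate shows that for t >= eps,
   y1 >= max (1/eps) 31 the difference of these two quantities is at least eps/2. *)

lemma norm_infsum_ge_finite_part:
  fixes g :: "'a \<Rightarrow> 'b::banach" and h :: "'a \<Rightarrow> real"
  assumes "finite P"
    and dominated: "\<And>n. n \<notin> P \<Longrightarrow> norm (g n) \<le> h n"
    and bounded: "\<And>F. finite F \<Longrightarrow> F \<inter> P = {} \<Longrightarrow> sum h F \<le> T"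
  shows "norm (sum g P) - T \<le> norm (infsum g UNIV)"
proof -
  have "0 \<le> h n" if "n \<in> UNIV - P" for n
    using dominated[of n] that by (meson DiffD2 norm_ge_zero order_trans)
  moreover have "bdd_above (sum h ` {F. F \<subseteq> UNIV - P \<and> finite F})"
    by (rule bdd_aboveI2[where M = T]) (use bounded in blast)
  ultimately have h_summable: "h summable_on (UNIV - P)"
    by (rule nonneg_bdd_above_summable_on)
  have norm_summable: "(\<lambda>n. norm (g n)) summable_on (UNIV - P)"
    by (rule summable_on_comparison_test[OF h_summable]) (use dominated in auto)
  then have g_summable: "g summable_on (UNIV - P)"
    by (rule abs_summable_summable)
  have "norm (infsum g (UNIV - P)) \<le> infsum (\<lambda>n. norm (g n)) (UNIV - P)"
    by (rule norm_infsum_bound) (use norm_summable in simp)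
  also have "\<dots> \<le> infsum h (UNIV - P)"
    by (rule infsum_mono[OF norm_summable h_summable]) (use dominated in auto)
  also have "\<dots> \<le> T"
    by (rule infsum_le_finite_sums[OF h_summable]) (use bounded in auto)
  finally have tail: "norm (infsum g (UNIV - P)) \<le> T" .
  have "infsum g UNIV = sum g P + infsum g (UNIV - P)"
    using infsum_Un_disjoint[of g P "UNIV - P"] \<open>finite P\<close> g_summable by simp
  then show ?thesis
    using tail norm_triangle_ineq4[of "infsum g UNIV" "infsum g (UNIV - P)"] by simp
qed

(* Distance of k + 1/2 from {1/2, -1/2}; it governs the decay of the theta terms. *)
definition mdist :: "int \<Rightarrow> nat" where
  "mdist k = nat (if 0 \<le> k then k else - k - 1)"

lemma mdist_product: "k * (k + 1) = int (mdist k * (mdist k + 1))"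
  by (simp add: mdist_def algebra_simps)

lemma mdist_eq_0_iff: "mdist k = 0 \<longleftrightarrow> k \<in> {0, -1}"
  by (auto simp: mdist_def)

(* Each value m of mdist is attained exactly twice, so the two-sided series sums to
   twice the geometric series. *)
lemma two_sided_geometric_has_sum:
  fixes w :: real
  assumes "0 \<le> w" "w < 1"
  shows "((\<lambda>k. w ^ mdist k) has_sum (2 / (1 - w))) UNIV"
proof -
  have geom: "((\<lambda>m::nat. w ^ m) has_sum (1 / (1 - w))) UNIV"
    by (rule sums_nonneg_imp_has_sum) (use assms in \<open>auto intro!: geometric_sums\<close>)
  have inj_neg: "inj (\<lambda>m::nat. - int m - 1)"
    by (auto simp: inj_def)
  have nonneg: "((\<lambda>k. w ^ mdist k) has_sum (1 / (1 - w))) (range int)"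
    by (subst has_sum_reindex) (auto simp: o_def mdist_def geom)
  have neg: "((\<lambda>k. w ^ mdist k) has_sum (1 / (1 - w))) (range (\<lambda>m::nat. - int m - 1))"
    by (subst has_sum_reindex[OF inj_neg]) (auto simp: o_def mdist_def geom)
  have cover: "range int \<union> range (\<lambda>m::nat. - int m - 1) = UNIV"
  proof -
    have "k \<in> range int \<or> k \<in> range (\<lambda>m::nat. - int m - 1)" for k :: int
    proof (cases "0 \<le> k")
      case True
      then have "k = int (nat k)" by simp
      then show ?thesis by blast
    next
      case False
      then have "k = - int (nat (- k - 1)) - 1" by simp
      then show ?thesis by blast
    qed
    then show ?thesis by blast
  qed
  have "((\<lambda>k. w ^ mdist k) has_sum (1 / (1 - w) + 1 / (1 - w))) UNIV"
    using has_sum_Un_disjoint[OF nonneg neg] cover by fastforce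
  then show ?thesis by simp
qed

lemma two_sided_geometric_pair_le:
  fixes w :: real and F :: "(int^2) set"
  assumes "0 \<le> w" "w < 1" "finite F"
  shows "(\<Sum>n\<in>F. w ^ mdist (n$1) * w ^ mdist (n$2)) \<le> (2 / (1 - w))^2"
proof -
  define A where "A = (\<lambda>n. n$1) ` F \<union> (\<lambda>n. n$2) ` F"
  define pair :: "int \<times> int \<Rightarrow> int^2" where "pair = (\<lambda>(x, y). vector [x, y])"
  have "finite A"
    using assms(3) by (simp add: A_def)
  have inj_pair: "inj pair"
    by (auto simp: pair_def inj_def vec_eq_iff forall_2)
  have "F \<subseteq> pair ` (A \<times> A)"
  proof
    fix n assume "n \<in> F"
    then have "(n$1, n$2) \<in> A \<times> A" and "n = pair (n$1, n$2)"
      by (auto simp: A_def pair_def vec_eq_iff forall_2)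
    then show "n \<in> pair ` (A \<times> A)" by blast
  qed
  then have "(\<Sum>n\<in>F. w ^ mdist (n$1) * w ^ mdist (n$2))
      \<le> (\<Sum>n\<in>pair ` (A \<times> A). w ^ mdist (n$1) * w ^ mdist (n$2))"
    using \<open>finite A\<close> assms(1) by (intro sum_mono2) auto
  also have "\<dots> = (\<Sum>(x, y)\<in>A \<times> A. w ^ mdist x * w ^ mdist y)"
    by (subst sum.reindex[OF inj_on_subset[OF inj_pair subset_UNIV]]) (simp add: pair_def case_prod_beta)
  also have "\<dots> = (\<Sum>k\<in>A. w ^ mdist k)^2"
    by (simp add: sum_product sum.cartesian_product power2_eq_square)
  also have "\<dots> \<le> (2 / (1 - w))^2"
  proof (rule power_mono)
    show "(\<Sum>k\<in>A. w ^ mdist k) \<le> 2 / (1 - w)"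
      by (rule finite_sum_le_has_sum[OF two_sided_geometric_has_sum[OF assms(1,2)]])
         (use \<open>finite A\<close> assms(1) in auto)
  qed (use assms(1) in \<open>simp add: sum_nonneg\<close>)
  finally show ?thesis .
qed

definition qform :: "real \<Rightarrow> real \<Rightarrow> real \<Rightarrow> real \<Rightarrow> real \<Rightarrow> real" where
  "qform y1 t y2 u v = u^2 * y1 + 2 * u * v * t + v^2 * y2"

lemma qform_gap:
  fixes x y :: int and y1 t y2 :: real
  assumes "0 \<le> t" "2 * t \<le> y1" "y1 \<le> y2" and off_core: "\<not> (x \<in> {0, -1} \<and> y \<in> {0, -1})"
  shows "y1 * (mdist x + mdist y) / 2
    \<le> qform y1 t y2 (x + 1/2) (y + 1/2) - qform y1 t y2 (1/2) (1/2)"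
proof -
  define k1 where "k1 = real (mdist x * (mdist x + 1))"
  define k2 where "k2 = real (mdist y * (mdist y + 1))"
  have kx: "real_of_int (x * (x + 1)) = k1" and ky: "real_of_int (y * (y + 1)) = k2"
    unfolding k1_def k2_def by (simp_all only: mdist_product of_int_of_nat_eq)
  have k1_ge: "2 * mdist x \<le> k1" and k2_ge: "2 * mdist y \<le> k2"
    unfolding k1_def k2_def by (cases "mdist x"; simp; cases "mdist y"; simp)+
  have two_le: "2 \<le> real (m * (m + 1))" if "m \<noteq> 0" for m :: nat
    using that by (cases m) auto
  have "mdist x \<noteq> 0 \<or> mdist y \<noteq> 0"
    using off_core by (simp add: mdist_eq_0_iff)
  then have k_sum: "2 \<le> k1 + k2"
    using two_le[of "mdist x"] two_le[of "mdist y"] unfolding k1_def k2_def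
    by (auto simp del: of_nat_mult of_nat_add)
  have expand: "qform y1 t y2 (x + 1/2) (y + 1/2) - qform y1 t y2 (1/2) (1/2)
      = y1 * k1 + y2 * k2 + 2 * t * ((x + 1/2) * (y + 1/2) - 1/4)"
    unfolding qform_def kx[symmetric] ky[symmetric] by (simp add: algebra_simps power2_eq_square)
  have cross: "- (k1 + k2 + 1) / 2 \<le> (x + 1/2) * (y + 1/2) - 1/4"
  proof -
    have "0 \<le> ((x + 1/2) + (y + 1/2))^2" by simp
    then show ?thesis
      unfolding kx[symmetric] ky[symmetric] by (simp add: algebra_simps power2_eq_square)
  qed
  have "t * (- (k1 + k2 + 1)) \<le> t * (2 * ((x + 1/2) * (y + 1/2) - 1/4))"
    using cross assms(1) by (intro mult_left_mono) auto
  moreover have "t * (k1 + k2 + 1) \<le> y1 / 2 * (k1 + k2 + 1)"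
    using assms(2) k1_ge k2_ge by (intro mult_right_mono) auto
  moreover have "y1 * k2 \<le> y2 * k2"
    using assms(3) k2_ge by (intro mult_right_mono) auto
  moreover have "y1 * (mdist x + mdist y) \<le> y1 * ((k1 + k2) / 2)"
    using assms(1,2) k1_ge k2_ge by (intro mult_left_mono) auto
  moreover have "y1 * 2 \<le> y1 * (k1 + k2)"
    using assms(1,2) k_sum by (intro mult_left_mono) auto
  ultimately show ?thesis
    unfolding expand by (simp add: algebra_simps)
qed

definition theta_term :: "real^2 \<Rightarrow> real^2 \<Rightarrow> complex^2^2 \<Rightarrow> int^2 \<Rightarrow> complex" where
  "theta_term a b \<tau> n = (let v = (\<chi> i. of_real (of_int (n$i) + a$i)) :: complex^2 in
      exp (2 * pi * \<i> * ((1/2) * (\<Sum>i\<in>UNIV. \<Sum>j\<in>UNIV. v$i * \<tau>$i$j * v$j)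
                         + (\<Sum>i\<in>UNIV. v$i * of_real (b$i)))))"

lemma theta_char_zero: "theta_char a b 0 \<tau> = infsum (theta_term a b \<tau>) UNIV"
  unfolding theta_char_def theta_term_def by simp

lemma norm_theta_term:
  assumes "\<tau>$2$1 = \<tau>$1$2"
  shows "cmod (theta_term a b \<tau> n)
    = exp (- pi * qform (Im (\<tau>$1$1)) (Im (\<tau>$1$2)) (Im (\<tau>$2$2)) (n$1 + a$1) (n$2 + a$2))"
  using assms unfolding theta_term_def Let_def norm_exp_eq_Re qform_def
  by (simp add: Im_sum sum_2 power2_eq_square algebra_simps)

(* For a = (1/2,1/2) the reflection n |-> -1-n flips n + a to -(n + a); it preserves the
   quadratic part and changes the linear part by an integer multiple of 2 pi i. *)
lemma theta_term_reflect:
  assumes "b = 0 \<or> b = (\<chi> i. 1/2)"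
  shows "theta_term (\<chi> i. 1/2) b \<tau> (\<chi> i. - 1 - n$i) = theta_term (\<chi> i. 1/2) b \<tau> n"
proof -
  define v :: "complex^2" where "v = (\<chi> i. of_real (of_int (n$i) + 1/2))"
  define q where "q = (\<Sum>i\<in>UNIV. \<Sum>j\<in>UNIV. v$i * \<tau>$i$j * v$j)"
  define l where "l = (\<Sum>i\<in>UNIV. v$i * of_real (b$i))"
  have reflected: "(\<chi> i. of_real (of_int ((\<chi> i. - 1 - n$i)$i) + ((\<chi> i. 1/2) :: real^2)$i)) = - v"
    by (simp add: v_def vec_eq_iff algebra_simps)
  have "\<exists>k::int. 2 * l = of_int k"
    using assms
  proof
    assume "b = 0"
    then show ?thesis by (auto simp: l_def intro: exI[of _ 0])
  next
    assume "b = (\<chi> i. 1/2)"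
    then have "2 * l = of_int (n$1 + n$2 + 1)"
      by (simp add: l_def v_def sum_2 algebra_simps)
    then show ?thesis by blast
  qed
  then obtain k :: int where k: "2 * l = of_int k" by blast
  have "2 * pi * \<i> * (q/2 - l) = 2 * pi * \<i> * (q/2 + l) + \<i> * (of_int (- k) * (of_real pi * 2))"
    using k by (simp add: algebra_simps)
  then have "exp (2 * pi * \<i> * (q/2 - l)) = exp (2 * pi * \<i> * (q/2 + l))"
    by (simp only: exp_plus_2pin)
  moreover have "theta_term (\<chi> i. 1/2) b \<tau> (\<chi> i. - 1 - n$i) = exp (2 * pi * \<i> * (q/2 - l))"
    unfolding theta_term_def Let_def reflected by (simp add: q_def l_def sum_negf)
  moreover have "theta_term (\<chi> i. 1/2) b \<tau> n = exp (2 * pi * \<i> * (q/2 + l))"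
    by (simp add: theta_term_def q_def l_def v_def)
  ultimately show ?thesis
    by simp
qed

(* The four lattice points where |theta_term| is largest. *)
definition theta_core :: "(int^2) set" where
  "theta_core = {vector [0, 0], vector [-1, -1], vector [0, -1], vector [-1, 0]}"

lemma finite_theta_core [simp]: "finite theta_core"
  by (simp add: theta_core_def)

lemma vector2_eq_iff: "(vector [a, b] :: 'a::zero^2) = vector [c, d] \<longleftrightarrow> a = c \<and> b = d"
  by (auto simp: vec_eq_iff forall_2)

lemma not_in_theta_core:
  assumes "n \<notin> theta_core"
  shows "\<not> (n$1 \<in> {0, -1} \<and> n$2 \<in> {0, -1})"
proof -
  have "n = vector [n$1, n$2]"
    by (simp add: vec_eq_iff forall_2)
  then show ?thesis
    using assms unfolding theta_core_def by auto
qed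

(* The core sum equals 2 g(0,0) + 2 g(0,-1), whose scaled moduli are 1 and exp (pi t). *)
lemma theta_core_bound:
  fixes \<tau> :: "complex^2^2" and b :: "real^2"
  assumes sym: "\<tau>$2$1 = \<tau>$1$2" and b: "b = 0 \<or> b = (\<chi> i. 1/2)"
  defines "Q \<equiv> qform (Im (\<tau>$1$1)) (Im (\<tau>$1$2)) (Im (\<tau>$2$2))"
  shows "2 * (exp (pi * Im (\<tau>$1$2)) - 1)
    \<le> exp (pi * Q (1/2) (1/2)) * cmod (\<Sum>n\<in>theta_core. theta_term (\<chi> i. 1/2) b \<tau> n)"
proof -
  let ?g = "theta_term (\<chi> i. 1/2) b \<tau>"
  have "(\<chi> i. - 1 - (vector [0, 0] :: int^2)$i) = vector [-1, -1]"
    and "(\<chi> i. - 1 - (vector [0, -1] :: int^2)$i) = vector [-1, 0]"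
    by (simp_all add: vec_eq_iff forall_2)
  then have "?g (vector [-1, -1]) = ?g (vector [0, 0])" "?g (vector [-1, 0]) = ?g (vector [0, -1])"
    using theta_term_reflect[OF b] by metis+
  then have core_sum: "(\<Sum>n\<in>theta_core. ?g n) = 2 * ?g (vector [0, 0]) + 2 * ?g (vector [0, -1])"
    unfolding theta_core_def by (simp add: vector2_eq_iff)
  have norm_g: "cmod (?g (vector [x, y])) = exp (- pi * Q (x + 1/2) (y + 1/2))" for x y
    unfolding norm_theta_term[OF sym] Q_def by simp
  define E where "E = exp (pi * Q (1/2) (1/2))"
  have "E * cmod (?g (vector [0, 0])) = 1"
    and "E * cmod (?g (vector [0, -1])) = exp (pi * Im (\<tau>$1$2))"
    unfolding E_def norm_g Q_def qform_def
    by (simp_all flip: exp_add add: algebra_simps power2_eq_square)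
  moreover have "2 * cmod (?g (vector [0, -1])) - 2 * cmod (?g (vector [0, 0]))
      \<le> cmod (\<Sum>n\<in>theta_core. ?g n)"
    unfolding core_sum using norm_diff_ineq[of "2 * ?g (vector [0, -1])" "2 * ?g (vector [0, 0])"]
    by (simp add: norm_mult add.commute)
  then have "E * (2 * cmod (?g (vector [0, -1])) - 2 * cmod (?g (vector [0, 0])))
      \<le> E * cmod (\<Sum>n\<in>theta_core. ?g n)"
    by (rule mult_left_mono) (simp add: E_def)
  ultimately show ?thesis
    unfolding E_def[symmetric] by (simp add: algebra_simps)
qed

lemma theta_tail_bound:
  fixes \<tau> :: "complex^2^2" and b :: "real^2"
  assumes sym: "\<tau>$2$1 = \<tau>$1$2"
    and "0 \<le> Im (\<tau>$1$2)" "2 * Im (\<tau>$1$2) \<le> Im (\<tau>$1$1)" "Im (\<tau>$1$1) \<le> Im (\<tau>$2$2)"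
    and "n \<notin> theta_core"
  defines "Q \<equiv> qform (Im (\<tau>$1$1)) (Im (\<tau>$1$2)) (Im (\<tau>$2$2))"
    and "w \<equiv> exp (- (pi * Im (\<tau>$1$1) / 2))"
  shows "exp (pi * Q (1/2) (1/2)) * cmod (theta_term (\<chi> i. 1/2) b \<tau> n)
    \<le> w ^ mdist (n$1) * w ^ mdist (n$2)"
proof -
  have gap: "Im (\<tau>$1$1) * (mdist (n$1) + mdist (n$2)) / 2 \<le> Q (n$1 + 1/2) (n$2 + 1/2) - Q (1/2) (1/2)"
    unfolding Q_def by (rule qform_gap) (use assms not_in_theta_core in auto)
  have "exp (pi * Q (1/2) (1/2)) * cmod (theta_term (\<chi> i. 1/2) b \<tau> n)
      = exp (- pi * (Q (n$1 + 1/2) (n$2 + 1/2) - Q (1/2) (1/2)))"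
    unfolding norm_theta_term[OF sym] Q_def by (simp flip: exp_add add: algebra_simps)
  also have "\<dots> \<le> exp (- pi * (Im (\<tau>$1$1) * (mdist (n$1) + mdist (n$2)) / 2))"
    using gap by simp
  also have "\<dots> = w ^ mdist (n$1) * w ^ mdist (n$2)"
    unfolding w_def by (simp flip: exp_of_nat_mult exp_add add: field_simps)
  finally show ?thesis .
qed

lemma theta_lower_bound:
  fixes \<tau> :: "complex^2^2" and b :: "real^2"
  assumes sym: "\<tau>$2$1 = \<tau>$1$2" and b: "b = 0 \<or> b = (\<chi> i. 1/2)"
    and shape: "0 \<le> Im (\<tau>$1$2)" "2 * Im (\<tau>$1$2) \<le> Im (\<tau>$1$1)" "Im (\<tau>$1$1) \<le> Im (\<tau>$2$2)"
    and pos: "0 < Im (\<tau>$1$1)"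
  defines "Q \<equiv> qform (Im (\<tau>$1$1)) (Im (\<tau>$1$2)) (Im (\<tau>$2$2))"
    and "w \<equiv> exp (- (pi * Im (\<tau>$1$1) / 2))"
  shows "2 * (exp (pi * Im (\<tau>$1$2)) - 1) - ((2 / (1 - w))^2 - 4)
    \<le> exp (pi * Q (1/2) (1/2)) * cmod (theta_char (\<chi> i. 1/2) b 0 \<tau>)"
proof -
  define E where "E = exp (pi * Q (1/2) (1/2))"
  define h where "h = (\<lambda>n::int^2. w ^ mdist (n$1) * w ^ mdist (n$2) / E)"
  have "0 \<le> w" "w < 1"
    using pos by (simp_all add: w_def)
  have "E > 0"
    by (simp add: E_def)
  have dominated: "cmod (theta_term (\<chi> i. 1/2) b \<tau> n) \<le> h n" if "n \<notin> theta_core" for n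
    using theta_tail_bound[OF sym shape that, of b] \<open>E > 0\<close>
    unfolding h_def E_def Q_def w_def by (simp add: field_simps mult.commute)
  have core_h: "sum h theta_core = 4 / E"
    unfolding theta_core_def h_def by (simp add: vector2_eq_iff mdist_def add_divide_distrib)
  have bounded: "sum h F \<le> ((2 / (1 - w))^2 - 4) / E" if "finite F" "F \<inter> theta_core = {}" for F
  proof -
    have "sum h F + 4 / E = sum h (F \<union> theta_core)"
      using that core_h by (simp add: sum.union_disjoint)
    also have "\<dots> \<le> (2 / (1 - w))^2 / E"
      using two_sided_geometric_pair_le[OF \<open>0 \<le> w\<close> \<open>w < 1\<close>, of "F \<union> theta_core"] that \<open>E > 0\<close>
      unfolding h_def by (simp add: sum_divide_distrib[symmetric] divide_right_mono)
    finally show ?thesis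
      by (simp add: diff_divide_distrib)
  qed
  have "cmod (\<Sum>n\<in>theta_core. theta_term (\<chi> i. 1/2) b \<tau> n) - ((2 / (1 - w))^2 - 4) / E
      \<le> cmod (theta_char (\<chi> i. 1/2) b 0 \<tau>)"
    unfolding theta_char_zero
    by (rule norm_infsum_ge_finite_part[OF _ dominated bounded]) simp
  then have "E * cmod (\<Sum>n\<in>theta_core. theta_term (\<chi> i. 1/2) b \<tau> n) - ((2 / (1 - w))^2 - 4)
      \<le> E * cmod (theta_char (\<chi> i. 1/2) b 0 \<tau>)"
    using \<open>E > 0\<close> by (simp add: field_simps)
  then show ?thesis
    using theta_core_bound[OF sym b] unfolding E_def Q_def by linarith
qed

(* Elementary numerics: the tail excess is at most 9 w, and w is tiny for y1 >= 31. *)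
lemma two_mult_le_exp:
  fixes x :: real
  assumes "0 \<le> x"
  shows "2 * x \<le> exp x"
proof -
  have "(1 + x/2) * (1 + x/2) \<le> exp (x/2) * exp (x/2)"
    using exp_ge_add_one_self[of "x/2"] assms by (intro mult_mono) auto
  moreover have "(1 + x/2) * (1 + x/2) = 2 * x + (1 - x/2)^2"
    by (simp add: power2_eq_square algebra_simps)
  ultimately show ?thesis
    by (simp flip: exp_add) (use zero_le_power2[of "1 - x/2"] in linarith)
qed

lemma geometric_square_excess:
  fixes w :: real
  assumes "0 \<le> w" "w \<le> 1/18"
  shows "(2 / (1 - w))^2 - 4 \<le> 9 * w"
proof -
  have "w * w \<le> w / 18"
    using mult_left_mono[OF assms(2) assms(1)] by simp
  then have "4 \<le> (9 * w + 4) * (1 - 2 * w)"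
    by (simp add: algebra_simps)
  also have "\<dots> \<le> (9 * w + 4) * (1 - w)^2"
    using assms(1) by (intro mult_left_mono) (auto simp: power2_eq_square algebra_simps)
  finally have "4 / (1 - w)^2 \<le> 9 * w + 4"
    using assms by (simp add: divide_le_eq)
  then show ?thesis
    by (simp add: power_divide)
qed

lemma theta_numeric_bound:
  fixes \<epsilon> t y1 :: real
  assumes "\<epsilon> > 0" "\<epsilon> \<le> t" "31 \<le> y1" "1/\<epsilon> \<le> y1"
  shows "\<epsilon>/2 \<le> 2 * (exp (pi * t) - 1) - ((2 / (1 - exp (- (pi * y1 / 2))))^2 - 4)"
proof -
  define w where "w = exp (- (pi * y1 / 2))"
  have "2 * y1 \<le> exp y1"
    using two_mult_le_exp assms(3) by simp
  also have "\<dots> \<le> exp (pi * y1 / 2)"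
    using pi_gt3 assms(3) by simp
  finally have w_y1: "w * (2 * y1) \<le> 1"
    using assms(3) by (simp add: w_def exp_minus field_simps)
  then have w_le: "w \<le> 1 / (2 * y1)"
    using assms(3) by (simp add: field_simps)
  have "w * 18 \<le> w * (2 * y1)"
    using assms(3) by (intro mult_left_mono) (auto simp: w_def)
  then have "w \<le> 1/18"
    using w_y1 by simp
  then have excess: "(2 / (1 - w))^2 - 4 \<le> 9 * w"
    by (rule geometric_square_excess[rotated]) (simp add: w_def)
  have "1 / (2 * y1) \<le> \<epsilon> / 2"
    using assms(1,3,4) by (simp add: field_simps)
  moreover have "3 * \<epsilon> \<le> pi * t"
    using pi_gt3 assms(1,2) by (intro mult_mono) auto
  moreover have "1 + pi * t \<le> exp (pi * t)"
    by (rule exp_ge_add_one_self)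
  ultimately show ?thesis
    using assms(1) excess w_le unfolding w_def[symmetric] by argo
qed

theorem mainTheorem15:
  fixes \<epsilon> :: real and \<tau> :: "complex^2^2" and a b :: "real^2"
  assumes "\<epsilon> > 0"
    and "\<tau> \<in> F2"
    and "Im (\<tau>$1$2) \<ge> \<epsilon>"
    and "Im (\<tau>$1$1) \<ge> max (1/\<epsilon>) 31"
    and "a = (\<chi> i. 1/2)"
    and "b = 0 \<or> b = (\<chi> i. 1/2)"
  shows "cmod (theta_char a b 0 \<tau>) * exp (pi * (a \<bullet> (im_mat \<tau> *v a))) \<ge> min (\<epsilon>/2) (31/100)"
proof -
  have symmetric: "transpose \<tau> = \<tau>" and shape: "0 \<le> Im (\<tau>$1$2)" "2 * Im (\<tau>$1$2) \<le> Im (\<tau>$1$1)"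
      "Im (\<tau>$1$1) \<le> Im (\<tau>$2$2)"
    using assms(2) unfolding F2_def siegel_H2_def by auto
  have sym: "\<tau>$2$1 = \<tau>$1$2"
    using arg_cong[OF symmetric, of "\<lambda>M. M$1$2"] by (simp add: transpose_def)
  have "a \<bullet> (im_mat \<tau> *v a) = qform (Im (\<tau>$1$1)) (Im (\<tau>$1$2)) (Im (\<tau>$2$2)) (1/2) (1/2)"
    using sym by (simp add: assms(5) inner_vec_def matrix_vector_mult_def im_mat_def sum_2 qform_def
        power2_eq_square algebra_simps)
  moreover have "\<epsilon>/2 \<le> 2 * (exp (pi * Im (\<tau>$1$2)) - 1) - ((2 / (1 - exp (- (pi * Im (\<tau>$1$1) / 2))))^2 - 4)"
    using theta_numeric_bound assms(1,3,4) by simp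
  moreover note theta_lower_bound[OF sym assms(6) shape]
  ultimately have "\<epsilon>/2 \<le> cmod (theta_char a b 0 \<tau>) * exp (pi * (a \<bullet> (im_mat \<tau> *v a)))"
    using assms(4,5) by (simp add: mult.commute)
  then show ?thesis
    by linarith
qed

end
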